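(* If $M_G$ is a connected mixed graph whose matrix $N(M_G)$ has rank $2$, then its underlying graph $G$ is a complete bipartite graph.
   Context: A mixed graph $M_G$ is obtained from a finite simple graph $G$ (its underlying graph) by orienting the edges of some subset of $E(G)$; it is connected if $G$ is. With $\omega=\frac{1+\mathbf{i}\sqrt3}{2}$, $N(M_G)$ has $(u,v)$-entry $\omega$ if $\overrightarrow{uv}$ is an arc, $\bar\omega$ if $\overrightarrow{vu}$ is an arc, $1$ for an undirected edge $\{u,v\}$, $0$ otherwise. *)

theory Defs
  imports "HOL-Analysis.Analysis"
begin

text \<open>A mixed graph on the finite vertex type 'n is given by the adjacency
relation adj of its underlying simple graph and an arcs relation arcs:
arcs u v means the edge {u,v} is oriented from u to v.  Edges of the
underlying graph that are not oriented in either direction are undirected.\<close>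

definition simple_graph :: "('n \<Rightarrow> 'n \<Rightarrow> bool) \<Rightarrow> bool" where
  "simple_graph adj \<longleftrightarrow> (\<forall>u v. adj u v \<longrightarrow> adj v u) \<and> (\<forall>u. \<not> adj u u)"

definition mixed_graph :: "('n \<Rightarrow> 'n \<Rightarrow> bool) \<Rightarrow> ('n \<Rightarrow> 'n \<Rightarrow> bool) \<Rightarrow> bool" where
  "mixed_graph adj arcs \<longleftrightarrow> simple_graph adj \<and>
     (\<forall>u v. arcs u v \<longrightarrow> adj u v) \<and> (\<forall>u v. arcs u v \<longrightarrow> \<not> arcs v u)"

definition connected_graph :: "('n \<Rightarrow> 'n \<Rightarrow> bool) \<Rightarrow> bool" where
  "connected_graph adj \<longleftrightarrow> (\<forall>u v. adj\<^sup>*\<^sup>* u v)"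

definition omega :: complex where
  "omega = (1 + \<i> * complex_of_real (sqrt 3)) / 2"

definition N_matrix :: "('n \<Rightarrow> 'n \<Rightarrow> bool) \<Rightarrow> ('n \<Rightarrow> 'n \<Rightarrow> bool) \<Rightarrow> complex ^ 'n ^ 'n" where
  "N_matrix adj arcs = (\<chi> u v.
     if arcs u v then omega
     else if arcs v u then cnj omega
     else if adj u v then 1 else 0)"

definition complete_bipartite :: "('n \<Rightarrow> 'n \<Rightarrow> bool) \<Rightarrow> bool" where
  "complete_bipartite adj \<longleftrightarrow> (\<exists>X Y. X \<noteq> {} \<and> Y \<noteq> {} \<and> X \<inter> Y = {} \<and> X \<union> Y = UNIV \<and>
     (\<forall>u v. adj u v \<longleftrightarrow> (u \<in> X \<and> v \<in> Y) \<or> (u \<in> Y \<and> v \<in> X)))"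

end

theory Submission
  imports Defs
begin

text \<open>The rows of N(M_G) indexed by the vertices of a triangle are linearly independent
(for entries a, b, c in {1, omega, cnj omega} on its edges, 2 Re (a c cnj b) is never 0), and
so are the rows indexed by an induced path on four vertices.  Hence rank 2 forbids both, and
in a connected graph without triangles and induced P4 every vertex lies within distance 2 of
a vertex x; the neighbours of x and the remaining vertices are then the two sides of a
complete bipartite graph.\<close>

lemma card_le_rank_if_rows_independent:
  fixes A :: "'a::field^'n^'m" and S :: "'m set"
  assumes indep: "\<And>d. (\<Sum>i\<in>S. d i *s row i A) = 0 \<Longrightarrow> \<forall>i\<in>S. d i = 0"
  shows "card S \<le> rank A"
proof -
  have inj: "inj_on (\<lambda>i. row i A) S"
  proof (rule inj_onI, rule ccontr)
    fix i j assume ij: "i \<in> S" "j \<in> S" "row i A = row j A" "i \<noteq> j"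
    define d where "d = (\<lambda>k. if k = i then (1::'a) else if k = j then -1 else 0)"
    have "(\<Sum>k\<in>S. d k *s row k A) = (\<Sum>k\<in>{i,j}. d k *s row k A)"
      by (rule sum.mono_neutral_right) (use ij in \<open>auto simp: d_def\<close>)
    also have "\<dots> = 0" using ij by (simp add: d_def)
    finally have "d i = 0" using indep ij(1) by blast
    then show False by (simp add: d_def)
  qed
  let ?B = "(\<lambda>i. row i A) ` S"
  have "vec.independent ?B"
    unfolding vec.independent_explicit
  proof (intro conjI allI impI ballI)
    show "finite ?B" by simp
    fix c v assume c: "(\<Sum>v\<in>?B. c v *s v) = 0" and v: "v \<in> ?B"
    have "(\<Sum>i\<in>S. c (row i A) *s row i A) = 0"
      using c by (simp add: sum.reindex[OF inj])
    then have "\<forall>i\<in>S. c (row i A) = 0" by (rule indep)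
    with v show "c v = 0" by auto
  qed
  moreover have "?B \<subseteq> rows A" by (auto simp: rows_def)
  ultimately have "card ?B \<le> rank A"
    unfolding row_rank_def_gen by (intro vec.independent_card_le_dim)
  then show ?thesis by (simp add: card_image[OF inj])
qed

lemma rank_zero: "rank (0::'a::field^'n^'m) = 0"
proof -
  have "rows (0::'a^'n^'m) \<subseteq> {0}" by (auto simp: rows_def row_def vec_eq_iff)
  then show ?thesis unfolding row_rank_def_gen by simp
qed

definition triangle :: "('n \<Rightarrow> 'n \<Rightarrow> bool) \<Rightarrow> 'n \<Rightarrow> 'n \<Rightarrow> 'n \<Rightarrow> bool" where
  "triangle adj a b c \<longleftrightarrow> adj a b \<and> adj b c \<and> adj c a"

definition induced_P4 :: "('n \<Rightarrow> 'n \<Rightarrow> bool) \<Rightarrow> 'n \<Rightarrow> 'n \<Rightarrow> 'n \<Rightarrow> 'n \<Rightarrow> bool" where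
  "induced_P4 adj a b c d \<longleftrightarrow> distinct [a, b, c, d] \<and>
     adj a b \<and> adj b c \<and> adj c d \<and> \<not> adj a c \<and> \<not> adj b d \<and> \<not> adj a d"

lemma within_distance_2_if_P4_free:
  assumes simple: "simple_graph adj"
    and connected: "connected_graph adj"
    and P4_free: "\<And>a b c d. \<not> induced_P4 adj a b c d"
  shows "v = x \<or> adj x v \<or> (\<exists>y. adj x y \<and> adj y v)"
proof -
  have "adj\<^sup>*\<^sup>* x v" using connected by (simp add: connected_graph_def)
  then show ?thesis
  proof (induction rule: rtranclp_induct)
    case base
    then show ?case by simp
  next
    case (step v w)
    consider "v = x" | "adj x v" | y where "adj x y" "adj y v" "\<not> adj x v" "v \<noteq> x"
      using step.IH by blast
    then show ?case
    proof cases
      case (3 y)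
      have "w = x \<or> adj x w \<or> adj y w"
      proof (rule ccontr)
        assume "\<not> ?thesis"
        then have "induced_P4 adj x y v w"
          using 3 step.hyps(2) simple
          by (auto simp: induced_P4_def simple_graph_def)
        with P4_free show False by blast
      qed
      with 3 show ?thesis by blast
    qed (use step.hyps(2) in blast)+
  qed
qed

lemma complete_bipartite_if_triangle_free_P4_free:
  assumes simple: "simple_graph adj"
    and connected: "connected_graph adj"
    and edge: "adj x y0"
    and triangle_free: "\<And>a b c. \<not> triangle adj a b c"
    and P4_free: "\<And>a b c d. \<not> induced_P4 adj a b c d"
  shows "complete_bipartite adj"
proof -
  have sym: "adj u v \<Longrightarrow> adj v u" and irrefl: "\<not> adj u u" for u v
    using simple by (auto simp: simple_graph_def)
  have near: "v = x \<or> adj x v \<or> (\<exists>y. adj x y \<and> adj y v)" for v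
    using within_distance_2_if_P4_free[OF simple connected P4_free] .
  define Y where "Y = {v. adj x v}"
  define X where "X = - Y"
  have "\<not> (u \<in> Y \<and> v \<in> Y)" if "adj u v" for u v
    using triangle_free[of x u v] that sym[of x v] by (auto simp: Y_def triangle_def)
  moreover have "\<not> (u \<in> X \<and> v \<in> X)" if uv: "adj u v" for u v
  proof
    assume "u \<in> X \<and> v \<in> X"
    then have nu: "\<not> adj x u" and nv: "\<not> adj x v" by (auto simp: X_def Y_def)
    have "u \<noteq> x" "v \<noteq> x" using uv nu nv sym[of u x] by blast+
    then obtain y where xy: "adj x y" and yu: "adj y u" using near[of u] nu by blast
    show False
    proof (cases "adj y v")
      case True
      then show False using triangle_free[of y u v] yu uv sym[of y v] by (auto simp: triangle_def)
    next
      case False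
      then have "induced_P4 adj x y u v"
        using xy yu uv nu nv \<open>u \<noteq> x\<close> \<open>v \<noteq> x\<close> irrefl by (auto simp: induced_P4_def)
      with P4_free show False by blast
    qed
  qed
  moreover have "adj u v" if u: "u \<in> X" and v: "v \<in> Y" for u v
  proof (rule ccontr)
    assume nuv: "\<not> adj u v"
    have xv: "adj x v" and nu: "\<not> adj x u" using u v by (auto simp: X_def Y_def)
    then have "u \<noteq> x" using nuv by blast
    then obtain y where xy: "adj x y" and yu: "adj y u" using near[of u] nu by blast
    have "\<not> adj v y" using triangle_free[of x v y] xv xy sym[of x y] by (auto simp: triangle_def)
    then have "induced_P4 adj v x y u"
      using xv xy yu nu nuv sym[of x v] sym[of v u] irrefl by (auto simp: induced_P4_def)
    with P4_free show False by blast
  qed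
  ultimately have "adj u v \<longleftrightarrow> (u \<in> X \<and> v \<in> Y) \<or> (u \<in> Y \<and> v \<in> X)" for u v
    unfolding X_def by (blast intro: sym)
  moreover have "X \<noteq> {}" "Y \<noteq> {}" using irrefl edge by (auto simp: X_def Y_def)
  moreover have "X \<inter> Y = {}" "X \<union> Y = UNIV" by (auto simp: X_def)
  ultimately show ?thesis
    unfolding complete_bipartite_def by blast
qed

lemma four_le_rank_if_induced_P4:
  fixes A :: "'a::field^'n^'n"
  assumes simple: "simple_graph adj"
    and support: "\<And>u v. A $ u $ v \<noteq> 0 \<longleftrightarrow> adj u v"
    and P4: "induced_P4 adj a b c d"
  shows "4 \<le> rank A"
proof -
  have edges: "adj a b" "adj b a" "adj b c" "adj c b" "adj c d" "adj d c"
    and non_edges: "\<not> adj a a" "\<not> adj a c" "\<not> adj a d" "\<not> adj b b" "\<not> adj b d"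
      "\<not> adj c a" "\<not> adj c c" "\<not> adj d a" "\<not> adj d b" "\<not> adj d d"
    and distinct: "distinct [a, b, c, d]"
    using P4 simple by (auto simp: induced_P4_def simple_graph_def)
  have zero: "A $ u $ v = 0" if "\<not> adj u v" for u v
    using support that by blast
  have nonzero: "A $ u $ v \<noteq> 0" if "adj u v" for u v
    using support that by blast
  have "card {a, b, c, d} \<le> rank A"
  proof (rule card_le_rank_if_rows_independent)
    fix k :: "'n \<Rightarrow> 'a"
    assume "(\<Sum>i\<in>{a, b, c, d}. k i *s row i A) = 0"
    then have column: "(\<Sum>i\<in>{a, b, c, d}. k i * A $ i $ j) = 0" for j
      by (auto simp: vec_eq_iff row_def)
    have "k b * A $ b $ a = 0" "k c * A $ c $ d = 0"
      using column[of a] column[of d] distinct by (simp_all add: zero non_edges)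
    then have kb: "k b = 0" and kc: "k c = 0" by (simp_all add: nonzero edges)
    have "k a * A $ a $ b = 0" "k d * A $ d $ c = 0"
      using column[of b] column[of c] distinct kb kc by (simp_all add: zero non_edges)
    then have "k a = 0" "k d = 0" by (simp_all add: nonzero edges)
    with kb kc show "\<forall>i\<in>{a, b, c, d}. k i = 0" by simp
  qed
  with distinct show ?thesis by simp
qed

lemma omega_mult_cnj: "omega * cnj omega = 1"
  by (simp add: omega_def complex_eq_iff power2_eq_square algebra_simps)

text \<open>The product is a power \<open>omega ^ k\<close> of the primitive sixth root of unity
\<open>omega\<close> with \<open>\<bar>k\<bar> \<le> 3\<close>, whose real part is \<open>\<plusminus>1/2\<close> or \<open>\<plusminus>1\<close>.\<close>

lemma Re_omega_product_neq_0:
  assumes "p \<in> {1, omega, cnj omega}" "q \<in> {1, omega, cnj omega}" "r \<in> {1, omega, cnj omega}"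
  shows "Re (p * q * cnj r) \<noteq> 0"
proof -
  have Re_Im_omega: "Re omega = 1/2" "Im omega = sqrt 3 / 2" and sqrt3: "sqrt 3 * sqrt 3 = (3::real)"
    by (simp_all add: omega_def)
  have "Re (p * q * cnj r) =
      Re p * Re q * Re r - Im p * Im q * Re r + Re p * Im q * Im r + Im p * Re q * Im r"
    by (simp add: algebra_simps)
  also have "\<dots> \<noteq> 0"
    using assms by (elim insertE emptyE; simp add: Re_Im_omega sqrt3)
  finally show ?thesis .
qed

context
  fixes adj arcs :: "'n::finite \<Rightarrow> 'n \<Rightarrow> bool"
  assumes mixed: "mixed_graph adj arcs"
begin

lemma N_matrix_cnj: "N_matrix adj arcs $ v $ u = cnj (N_matrix adj arcs $ u $ v)"
  using mixed by (auto simp: N_matrix_def mixed_graph_def simple_graph_def)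

lemma N_matrix_entry_on_edge: "adj u v \<Longrightarrow> N_matrix adj arcs $ u $ v \<in> {1, omega, cnj omega}"
  using mixed by (auto simp: N_matrix_def mixed_graph_def)

lemma N_matrix_neq_0_iff: "N_matrix adj arcs $ u $ v \<noteq> 0 \<longleftrightarrow> adj u v"
  using mixed omega_mult_cnj
  by (auto simp: N_matrix_def mixed_graph_def simple_graph_def)

lemma N_matrix_mult_cnj: "adj u v \<Longrightarrow> N_matrix adj arcs $ u $ v * cnj (N_matrix adj arcs $ u $ v) = 1"
  using N_matrix_entry_on_edge[of u v] omega_mult_cnj by (auto simp: mult.commute)

lemma three_le_rank_if_triangle:
  assumes tri: "triangle adj x y z"
  shows "3 \<le> rank (N_matrix adj arcs)"
proof -
  let ?N = "N_matrix adj arcs"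
  have irrefl: "\<not> adj u u" for u
    using mixed by (simp add: mixed_graph_def simple_graph_def)
  then have diag: "?N $ u $ u = 0" for u
    using N_matrix_neq_0_iff by blast
  have edges: "adj x y" "adj y z" "adj x z"
    using tri mixed by (auto simp: triangle_def mixed_graph_def simple_graph_def)
  with irrefl have distinct: "distinct [x, y, z]" by auto
  define a b c where "a = ?N $ x $ y" and "b = ?N $ x $ z" and "c = ?N $ y $ z"
  have unit: "a * cnj a = 1" "b * cnj b = 1" "c * cnj c = 1"
    using N_matrix_mult_cnj edges by (auto simp: a_def b_def c_def)
  have "card {x, y, z} \<le> rank ?N"
  proof (rule card_le_rank_if_rows_independent)
    fix k :: "'n \<Rightarrow> complex"
    assume "(\<Sum>i\<in>{x, y, z}. k i *s row i ?N) = 0"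
    then have column: "(\<Sum>i\<in>{x, y, z}. k i * ?N $ i $ j) = 0" for j
      by (auto simp: vec_eq_iff row_def)
    have "k y * cnj a + k z * cnj b = 0" "k x * a + k z * cnj c = 0" "k x * b + k y * c = 0"
      using column[of x] column[of y] column[of z] distinct
      by (simp_all add: diag a_def b_def c_def N_matrix_cnj[of y x] N_matrix_cnj[of z x]
          N_matrix_cnj[of z y])
    \<comment> \<open>eliminating \<open>k y\<close> and \<open>k z\<close> leaves \<open>k x * 2 Re (a c cnj b) = 0\<close>\<close>
    with unit have "k x * (a * c * cnj b + cnj (a * c * cnj b)) = 0"
      by simp algebra
    moreover have "Re (a * c * cnj b) \<noteq> 0"
      unfolding a_def b_def c_def by (intro Re_omega_product_neq_0 N_matrix_entry_on_edge edges)
    ultimately have "k x = 0" by (simp only: complex_add_cnj mult_eq_0_iff of_real_eq_0_iff) simp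
    moreover have "c \<noteq> 0" using unit by auto
    ultimately show "\<forall>i\<in>{x, y, z}. k i = 0"
      using \<open>k x * a + k z * cnj c = 0\<close> \<open>k x * b + k y * c = 0\<close> by simp
  qed
  with distinct show ?thesis by simp
qed

end

theorem theorem5p7:
  fixes adj arcs :: "'n::finite \<Rightarrow> 'n \<Rightarrow> bool"
  assumes "mixed_graph adj arcs"
    and "connected_graph adj"
    and "rank (N_matrix adj arcs) = 2"
  shows "complete_bipartite adj"
proof -
  have simple: "simple_graph adj" using assms(1) by (simp add: mixed_graph_def)
  have support: "N_matrix adj arcs $ u $ v \<noteq> 0 \<longleftrightarrow> adj u v" for u v
    using N_matrix_neq_0_iff[OF assms(1)] .
  have "\<exists>x y. adj x y"
  proof (rule ccontr)
    assume "\<nexists>x y. adj x y"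
    with support have "N_matrix adj arcs = 0" by (simp add: vec_eq_iff)
    with assms(3) show False by (simp add: rank_zero)
  qed
  then obtain x y where edge: "adj x y" by blast
  have triangle_free: "\<not> triangle adj a b c" for a b c
    using three_le_rank_if_triangle[OF assms(1), of a b c] assms(3) by auto
  have P4_free: "\<not> induced_P4 adj a b c d" for a b c d
    using four_le_rank_if_induced_P4[OF simple support, of a b c d] assms(3) by auto
  show ?thesis
    using complete_bipartite_if_triangle_free_P4_free[OF simple assms(2) edge triangle_free P4_free] .
qed

end
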